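(* Let $n\ge m\ge 2$ be integers. Consider any optimal solution of the shifting-checkers game with $n$ black and $m$ white checkers whose first move is the slide of the white checker at position $n+2$ to the left into position $n+1$ (producing $\xi_1=b^nwOw^{m-1}$). For $1\le t\le m$ define $$\lambda_t=\begin{cases} b^{n-t}(wb)^tOw^{m-t} & t \text{ even},\\ b^{n-t}O(wb)^tw^{m-t} & t\text{ odd}.\end{cases}$$ Then this optimal solution passes through all of the configurations $\lambda_1,\lambda_2,\dots,\lambda_m$, and for each $1\le i\le m-1$ the portion of the move sequence leading from $\lambda_i$ to $\lambda_{i+1}$ is the same for all such optimal solutions (the shortest path from $\lambda_i$ to $\lambda_{i+1}$ is unique).
   Context: The game: positions $1,\dots,n+m+1$ in a row, each holding a black checker ($b$), a white checker ($w$) or nothing, with exactly one empty position (the vacancy $O$); configurations are written as words over $\{b,w,O\}$, exponents denoting repetition. Initial configuration $b^nOw^m$, final configuration $w^mOb^n$. A legal move is a slide (a checker adjacent to the vacancy moves into it) or a jump (a checker at distance two from the vacancy jumps over the checker between them into it), in either direction. An optimal solution is a sequence of legal moves from the initial to the final configuration of minimum length (this minimum is $nm+n+m$). *)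

theory Defs
  imports Main
begin

datatype cell = Bk | Wh | Vac

type_synonym config = "cell list"

text \<open>A legal move: a checker at list index j moves into the vacancy at index i,
  either a slide (distance 1) or a jump over a checker (distance 2).
  List index k corresponds to position k+1.\<close>
definition legal_move :: "config \<Rightarrow> config \<Rightarrow> bool" where
  "legal_move c c' \<longleftrightarrow>
     (\<exists>i j. i < length c \<and> j < length c \<and> c ! i = Vac \<and> c ! j \<noteq> Vac \<and>
        ((i = j + 1 \<or> j = i + 1) \<or>
         ((i = j + 2 \<or> j = i + 2) \<and> c ! ((i + j) div 2) \<noteq> Vac)) \<and>
        c' = c[i := c ! j, j := Vac])"

definition init_config :: "nat \<Rightarrow> nat \<Rightarrow> config" where
  "init_config n m = replicate n Bk @ [Vac] @ replicate m Wh"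

definition final_config :: "nat \<Rightarrow> nat \<Rightarrow> config" where
  "final_config n m = replicate m Wh @ [Vac] @ replicate n Bk"

text \<open>A solution is the list of visited configurations; its number of moves is length - 1.\<close>
definition is_solution :: "nat \<Rightarrow> nat \<Rightarrow> config list \<Rightarrow> bool" where
  "is_solution n m p \<longleftrightarrow> p \<noteq> [] \<and> hd p = init_config n m \<and> last p = final_config n m \<and>
     (\<forall>k. k + 1 < length p \<longrightarrow> legal_move (p ! k) (p ! (k + 1)))"

definition is_optimal :: "nat \<Rightarrow> nat \<Rightarrow> config list \<Rightarrow> bool" where
  "is_optimal n m p \<longleftrightarrow> is_solution n m p \<and>
     (\<forall>q. is_solution n m q \<longrightarrow> length p \<le> length q)"

definition xi1 :: "nat \<Rightarrow> nat \<Rightarrow> config" where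
  "xi1 n m = replicate n Bk @ [Wh, Vac] @ replicate (m - 1) Wh"

definition lam :: "nat \<Rightarrow> nat \<Rightarrow> nat \<Rightarrow> config" where
  "lam n m t = (if even t
     then replicate (n - t) Bk @ concat (replicate t [Wh, Bk]) @ [Vac] @ replicate (m - t) Wh
     else replicate (n - t) Bk @ [Vac] @ concat (replicate t [Wh, Bk]) @ replicate (m - t) Wh)"

end

theory Submission
  imports Defs
begin

text \<open>A move carries the vacancy past one or two checkers, and only a jump over a checker of
  the other colour removes a black--white inversion. So the number of inversions plus the numbers
  of black checkers left and white checkers right of the vacancy changes by at most one per move,
  except for jumps over a checker of the same colour; with suitable correction terms this becomes a
  potential that changes by at most one per move and falls from \<open>nm + n + m\<close> to \<open>0\<close>. An explicit
  solution with \<open>nm + n + m\<close> moves then shows that an optimal solution lowers the potential at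
  every move. After \<open>\<xi>\<^sub>1\<close>, a case analysis of these tight moves shows that from \<open>\<lambda>\<^sub>t\<close> the only
  tight move with a tight successor turns the vacancy around, after which \<open>t + 1\<close> forced jumps
  sweep it through the alternating block, arriving at \<open>\<lambda>\<^sub>t\<^sub>+\<^sub>1\<close>.\<close>

section \<open>The potential\<close>

fun inversions :: "cell list \<Rightarrow> nat" where
  "inversions [] = 0"
| "inversions (c # cs) = (if c = Bk then count_list cs Wh else 0) + inversions cs"

fun twins_followed_by :: "cell \<Rightarrow> cell \<Rightarrow> cell list \<Rightarrow> nat" where
  "twins_followed_by a b (c1 # c2 # cs) =
     (if c1 = a \<and> c2 = a \<and> b \<in> set cs then 1 else 0) + twins_followed_by a b (c2 # cs)"
| "twins_followed_by a b _ = 0"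

definition run_length :: "cell \<Rightarrow> cell list \<Rightarrow> nat" where
  "run_length a xs = length (takeWhile (\<lambda>z. z = a) xs)"

text \<open>The configuration \<open>rev xr @ Vac # y\<close> is given by the two halves read outwards
  from the vacancy.\<close>
definition split_potential :: "cell list \<Rightarrow> cell list \<Rightarrow> int" where
  "split_potential xr y =
     int (inversions (rev xr @ y) + count_list xr Bk + count_list y Wh
          + twins_followed_by Wh Bk xr + twins_followed_by Bk Wh y)
     - (if Wh \<notin> set y then int (run_length Bk xr div 2) else 0)
     - (if Bk \<notin> set xr then int (run_length Wh y div 2) else 0)"

definition potential :: "config \<Rightarrow> int" where
  "potential c = split_potential (rev (takeWhile (\<lambda>z. z \<noteq> Vac) c)) (tl (dropWhile (\<lambda>z. z \<noteq> Vac) c))"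

lemma inversions_append [simp]:
  "inversions (xs @ ys) = inversions xs + inversions ys + count_list xs Bk * count_list ys Wh"
  by (induction xs) (auto simp: algebra_simps)

lemma run_length_simps [simp]:
  "run_length a [] = 0"
  "run_length a (c # xs) = (if c = a then Suc (run_length a xs) else 0)"
  by (auto simp: run_length_def)

lemma twins_followed_by_Cons:
  "twins_followed_by a b (c # xs) =
     (if c = a \<and> xs \<noteq> [] \<and> hd xs = a \<and> b \<in> set (tl xs) then 1 else 0) + twins_followed_by a b xs"
  by (cases xs) auto

lemma split_potential_slide_Bk:
  "split_potential xr (Bk # y) = split_potential (Bk # xr) y - 1
     + (if Wh \<in> set y \<and> hd y = Bk then 1 else 0)
     + (if Wh \<notin> set y \<and> odd (run_length Bk xr) then 1 else 0)"
  by (cases y) (auto simp: split_potential_def twins_followed_by_Cons)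

lemma split_potential_slide_Wh:
  "split_potential xr (Wh # y) = split_potential (Wh # xr) y + 1
     - (if Bk \<in> set xr \<and> hd xr = Wh then 1 else 0)
     - (if Bk \<notin> set xr \<and> odd (run_length Wh y) then 1 else 0)"
  by (cases xr) (auto simp: split_potential_def twins_followed_by_Cons)

lemma split_potential_jump_Bk_Bk:
  "split_potential xr (Bk # Bk # y) = split_potential (Bk # Bk # xr) y - 1
     + (if Wh \<in> set y \<and> hd y = Bk then 1 else 0)"
  by (cases y) (auto simp: split_potential_def twins_followed_by_Cons)

lemma split_potential_jump_Wh_Wh:
  "split_potential xr (Wh # Wh # y) = split_potential (Wh # Wh # xr) y + 1
     - (if Bk \<in> set xr \<and> hd xr = Wh then 1 else 0)"
  by (cases xr) (auto simp: split_potential_def twins_followed_by_Cons)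

lemma split_potential_jump_Wh_Bk:
  "split_potential xr (Wh # Bk # y) = split_potential (Wh # Bk # xr) y - 1
     + (if Wh \<in> set y \<and> hd y = Bk then 1 else 0)"
  by (cases y) (auto simp: split_potential_def twins_followed_by_Cons)

lemma split_potential_jump_Bk_Wh:
  "split_potential xr (Bk # Wh # y) = split_potential (Bk # Wh # xr) y + 1
     - (if Bk \<in> set xr \<and> hd xr = Wh then 1 else 0)"
  by (cases xr) (auto simp: split_potential_def twins_followed_by_Cons)

text \<open>The slide and jump rules overlap as rewrite rules, so they are kept apart.\<close>

lemmas split_potential_slides = split_potential_slide_Bk split_potential_slide_Wh

lemmas split_potential_jumps = split_potential_jump_Bk_Bk split_potential_jump_Wh_Wh
  split_potential_jump_Wh_Bk split_potential_jump_Bk_Wh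

lemma potential_split:
  "Vac \<notin> set x \<Longrightarrow> potential (x @ Vac # y) = split_potential (rev x) y"
  by (simp add: potential_def takeWhile_append dropWhile_append)

section \<open>Moves and the potential\<close>

lemma legal_move_slide_right:
  "a \<noteq> Vac \<Longrightarrow> legal_move (A @ [a, Vac] @ B) (A @ [Vac, a] @ B)"
  unfolding legal_move_def
 
  by (rule exI[of _ "length A + 1"], rule exI[of _ "length A"])
    (simp add: nth_append list_update_append)

lemma legal_move_slide_left:
  "a \<noteq> Vac \<Longrightarrow> legal_move (A @ [Vac, a] @ B) (A @ [a, Vac] @ B)"
  unfolding legal_move_def
 
  by (rule exI[of _ "length A"], rule exI[of _ "length A + 1"])
    (simp add: nth_append list_update_append)

lemma legal_move_jump_right:
  "a \<noteq> Vac \<Longrightarrow> b \<noteq> Vac \<Longrightarrow> legal_move (A @ [b, a, Vac] @ B) (A @ [Vac, a, b] @ B)"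
  unfolding legal_move_def
 
  by (rule exI[of _ "length A + 2"], rule exI[of _ "length A"])
    (simp add: nth_append list_update_append)

lemma legal_move_jump_left:
  "a \<noteq> Vac \<Longrightarrow> b \<noteq> Vac \<Longrightarrow> legal_move (A @ [Vac, a, b] @ B) (A @ [b, a, Vac] @ B)"
  unfolding legal_move_def
 
  by (rule exI[of _ "length A"], rule exI[of _ "length A + 2"])
    (simp add: nth_append list_update_append)

lemma nth_eq_Vac_split:
  assumes "Vac \<notin> set x" "Vac \<notin> set y" "i < length (x @ Vac # y)" "(x @ Vac # y) ! i = Vac"
  shows "i = length x"
proof (rule ccontr)
  assume "i \<noteq> length x"
  then consider "i < length x" | "i > length x" by linarith
  then show False
  proof cases
    case 1
    then show False using assms(1,4) nth_mem by (fastforce simp: nth_append)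
  next
    case 2
    then have "y ! (i - length x - 1) = Vac" "i - length x - 1 < length y"
      using assms(3,4) by (auto simp: nth_append nth_Cons')
    then show False using assms(2) nth_mem by fastforce
  qed
qed

lemma legal_move_cases:
  assumes "legal_move (rev xr @ Vac # y) c'" "Vac \<notin> set xr" "Vac \<notin> set y"
  obtains (slide_right) a xr0 where "xr = a # xr0" "c' = rev xr0 @ Vac # a # y"
    | (slide_left) a y0 where "y = a # y0" "c' = rev (a # xr) @ Vac # y0"
    | (jump_right) a b xr0 where "xr = a # b # xr0" "c' = rev xr0 @ Vac # a # b # y"
    | (jump_left) a b y0 where "y = a # b # y0" "c' = rev (a # b # xr) @ Vac # y0"
proof -
  let ?c = "rev xr @ Vac # y"
  obtain i j where ij: "i < length ?c" "j < length ?c" "?c ! i = Vac"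
    "(i = j + 1 \<or> j = i + 1) \<or> ((i = j + 2 \<or> j = i + 2) \<and> ?c ! ((i + j) div 2) \<noteq> Vac)"
    "c' = ?c[i := ?c ! j, j := Vac]"
    using assms(1) unfolding legal_move_def by blast
  have i: "i = length xr" using nth_eq_Vac_split[of "rev xr" y i] ij assms by simp
  consider "i = j + 1" | "j = i + 1" | "i = j + 2" | "j = i + 2" using ij(4) by blast
  then show ?thesis
  proof cases
    case 1
    then obtain a xr0 where "xr = a # xr0" using i by (cases xr) auto
    then show ?thesis using ij(5) 1 i
      by (intro slide_right) (simp_all add: nth_append list_update_append)
  next
    case 2
    then obtain a y0 where "y = a # y0" using i ij(2) by (cases y) auto
    then show ?thesis using ij(5) 2 i
      by (intro slide_left) (simp_all add: nth_append list_update_append)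
  next
    case 3
    then obtain a b xr0 where "xr = a # b # xr0" using i by (cases xr; cases "tl xr") auto
    then show ?thesis using ij(5) 3 i
      by (intro jump_right) (simp_all add: nth_append list_update_append)
  next
    case 4
    then obtain a b y0 where "y = a # b # y0" using i ij(2) by (cases y; cases "tl y") auto
    then show ?thesis using ij(5) 4 i
      by (intro jump_left) (simp_all add: nth_append list_update_append)
  qed
qed

definition one_vacancy :: "config \<Rightarrow> bool" where
  "one_vacancy c \<longleftrightarrow> (\<exists>x y. c = x @ Vac # y \<and> Vac \<notin> set x \<and> Vac \<notin> set y)"

lemma split_potential_legal_move:
  assumes "legal_move (rev xr @ Vac # y) c'" "Vac \<notin> set xr" "Vac \<notin> set y"
  obtains xr' y' where "c' = rev xr' @ Vac # y'" "Vac \<notin> set xr'" "Vac \<notin> set y'"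
    "\<bar>split_potential xr' y' - split_potential xr y\<bar> \<le> 1"
  using assms(1-3)
proof (cases rule: legal_move_cases)
  case (slide_right a xr0)
  then have "a = Bk \<or> a = Wh" using assms(2) by (cases a) auto
  then show ?thesis using slide_right assms(2,3)
    by (intro that[of xr0 "a # y"]) (auto simp: split_potential_slides)
next
  case (slide_left a y0)
  then have "a = Bk \<or> a = Wh" using assms(3) by (cases a) auto
  then show ?thesis using slide_left assms(2,3)
    by (intro that[of "a # xr" y0]) (auto simp: split_potential_slides)
next
  case (jump_right a b xr0)
  then have "a \<noteq> Vac" "b \<noteq> Vac" using assms(2) by auto
  then show ?thesis using jump_right assms(2,3)
    by (intro that[of xr0 "a # b # y"]; cases a; cases b) (auto simp: split_potential_jumps)
next
  case (jump_left a b y0)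
  then have "a \<noteq> Vac" "b \<noteq> Vac" using assms(3) by auto
  then show ?thesis using jump_left assms(2,3)
    by (intro that[of "a # b # xr" y0]; cases a; cases b) (auto simp: split_potential_jumps)
qed

lemma potential_legal_move:
  assumes "legal_move c c'" "one_vacancy c"
  shows "one_vacancy c' \<and> \<bar>potential c' - potential c\<bar> \<le> 1"
proof -
  obtain x y where c: "c = x @ Vac # y" "Vac \<notin> set x" "Vac \<notin> set y"
    using assms(2) by (auto simp: one_vacancy_def)
  then have "legal_move (rev (rev x) @ Vac # y) c'" "Vac \<notin> set (rev x)" using assms(1) by simp_all
  then obtain xr' y' where "c' = rev xr' @ Vac # y'" "Vac \<notin> set xr'" "Vac \<notin> set y'"
    "\<bar>split_potential xr' y' - split_potential (rev x) y\<bar> \<le> 1"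
    using split_potential_legal_move c(3) by metis
  moreover have "one_vacancy c'"
    using calculation(1-3) unfolding one_vacancy_def
    by (intro exI[of _ "rev xr'"] exI[of _ y']) auto
  ultimately show ?thesis using c by (auto simp: potential_split)
qed

lemma potential_along_moves:
  assumes moves: "\<And>k. k + 1 < length p \<Longrightarrow> legal_move (p ! k) (p ! (k + 1))"
    and start: "one_vacancy (p ! 0)"
  shows "l < length p \<Longrightarrow> k \<le> l \<Longrightarrow>
    one_vacancy (p ! l) \<and> \<bar>potential (p ! l) - potential (p ! k)\<bar> \<le> int (l - k)"
proof (induction l arbitrary: k)
  case 0
  then show ?case using start by simp
next
  case (Suc l)
  have "one_vacancy (p ! l)" using Suc.IH[of 0] Suc.prems by simp
  moreover have "legal_move (p ! l) (p ! Suc l)" using moves Suc.prems(1) by simp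
  ultimately have step: "one_vacancy (p ! Suc l) \<and> \<bar>potential (p ! Suc l) - potential (p ! l)\<bar> \<le> 1"
    using potential_legal_move by blast
  show ?case
  proof (cases "k = Suc l")
    case False
    then have "\<bar>potential (p ! l) - potential (p ! k)\<bar> \<le> int (l - k)" using Suc by simp
    then show ?thesis using step False Suc.prems by auto
  qed (use step in simp)
qed

definition tight_move :: "config \<Rightarrow> config \<Rightarrow> bool" where
  "tight_move c c' \<longleftrightarrow> legal_move c c' \<and> potential c' = potential c - 1"

lemma tight_move_cases:
  assumes "tight_move (rev xr @ Vac # y) c'" "Vac \<notin> set xr" "Vac \<notin> set y"
  obtains (slide_Bk) xr0 where "xr = Bk # xr0" "c' = rev xr0 @ Vac # Bk # y"
      "\<not> (Wh \<in> set y \<and> hd y = Bk)" "\<not> (Wh \<notin> set y \<and> odd (run_length Bk xr0))"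
    | (slide_Wh) y0 where "y = Wh # y0" "c' = rev (Wh # xr) @ Vac # y0"
      "\<not> (Bk \<in> set xr \<and> hd xr = Wh)" "\<not> (Bk \<notin> set xr \<and> odd (run_length Wh y0))"
    | (jump_Bk) a xr0 where "a \<noteq> Vac" "xr = a # Bk # xr0" "c' = rev xr0 @ Vac # a # Bk # y"
      "\<not> (Wh \<in> set y \<and> hd y = Bk)"
    | (jump_Wh) a y0 where "a \<noteq> Vac" "y = a # Wh # y0" "c' = rev (a # Wh # xr) @ Vac # y0"
      "\<not> (Bk \<in> set xr \<and> hd xr = Wh)"
proof -
  have move: "legal_move (rev xr @ Vac # y) c'" and pot: "potential c' = split_potential xr y - 1"
    using assms(1,2) by (auto simp: tight_move_def potential_split)
  from move assms(2,3) show ?thesis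
  proof (cases rule: legal_move_cases)
    case (slide_right a xr0)
    then have "potential c' = split_potential xr0 (a # y)" "a \<noteq> Vac"
      using assms(2) by (auto simp: potential_split)
    then show ?thesis using pot slide_right that
      by (cases a) (auto simp: split_potential_slides split: if_splits)
  next
    case (slide_left a y0)
    then have "potential c' = split_potential (a # xr) y0" "a \<noteq> Vac"
      using assms potential_split[of "rev (a # xr)" y0] by auto
    then show ?thesis using pot slide_left that
      by (cases a) (auto simp: split_potential_slides split: if_splits)
  next
    case (jump_right a b xr0)
    then have "potential c' = split_potential xr0 (a # b # y)" "a \<noteq> Vac" "b \<noteq> Vac"
      using assms(2) by (auto simp: potential_split)
    then show ?thesis using pot jump_right that
      by (cases a; cases b) (auto simp: split_potential_jumps split: if_splits)
  next
    case (jump_left a b y0)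
    then have "potential c' = split_potential (a # b # xr) y0" "a \<noteq> Vac" "b \<noteq> Vac"
      using assms potential_split[of "rev (a # b # xr)" y0] by auto
    then show ?thesis using pot jump_left that
      by (cases a; cases b) (auto simp: split_potential_jumps split: if_splits)
  qed
qed

section \<open>The standard solution\<close>

fun wb :: "nat \<Rightarrow> cell list" where
  "wb 0 = []"
| "wb (Suc k) = Wh # Bk # wb k"

fun bw :: "nat \<Rightarrow> cell list" where
  "bw 0 = []"
| "bw (Suc k) = Bk # Wh # bw k"

lemma wb_append_Wh [simp]: "wb k @ Wh # zs = Wh # bw k @ zs"
  by (induction k) auto

lemma bw_append_Bk [simp]: "bw k @ Bk # zs = Bk # wb k @ zs"
  by (induction k) auto

lemma rev_wb [simp]: "rev (wb k) = bw k"
  and rev_bw [simp]: "rev (bw k) = wb k"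
  by (induction k) auto

lemma set_wb [simp]: "x \<in> set (wb k) \<longleftrightarrow> k \<noteq> 0 \<and> x \<noteq> Vac"
  and set_bw [simp]: "x \<in> set (bw k) \<longleftrightarrow> k \<noteq> 0 \<and> x \<noteq> Vac"
  by (induction k) (auto, (cases x; simp)+)

lemma wb_eq_concat: "wb k = concat (replicate k [Wh, Bk])"
  by (induction k) auto

lemma sweep_left: "(legal_move ^^ k) (A @ bw k @ Vac # B) (A @ Vac # wb k @ B)"
proof (induction k arbitrary: B)
  case (Suc k)
  have "legal_move (A @ bw (Suc k) @ Vac # B) (A @ bw k @ Vac # Wh # Bk # B)"
    using legal_move_jump_right[of Wh Bk "A @ bw k" B] by simp
  from relpowp_Suc_I2[OF this Suc.IH[of "Wh # Bk # B"]] show ?case by simp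
qed simp

lemma sweep_right: "(legal_move ^^ k) (A @ Vac # bw k @ B) (A @ wb k @ Vac # B)"
proof (induction k arbitrary: A)
  case (Suc k)
  have "legal_move (A @ Vac # bw (Suc k) @ B) ((A @ [Wh, Bk]) @ Vac # bw k @ B)"
    using legal_move_jump_left[of Bk Wh A "bw k @ B"] by simp
  from relpowp_Suc_I2[OF this Suc.IH[of "A @ [Wh, Bk]"]] show ?case by simp
qed simp

text \<open>The standard solution grows the alternating block through all the \<open>\<lambda>\<^sub>t\<close>, then lets the
  remaining black checkers pass through it one by one, and finally dissolves it.\<close>

definition stage :: "nat \<Rightarrow> nat \<Rightarrow> nat \<Rightarrow> nat \<Rightarrow> nat \<Rightarrow> bool \<Rightarrow> config" where
  "stage x y z u v vac_first = replicate x Wh @ replicate y Bk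
     @ (if vac_first then Vac # wb z else wb z @ [Vac]) @ replicate u Wh @ replicate v Bk"

lemma stage_absorb_from_right:
  "(legal_move ^^ (z + 2)) (stage x (Suc y) z (Suc u) v False) (stage x y (Suc z) u v True)"
proof -
  define W R where "W = replicate x Wh @ replicate y Bk" and "R = replicate u Wh @ replicate v Bk"
  have "legal_move (stage x (Suc y) z (Suc u) v False) (W @ bw (Suc z) @ Vac # R)"
    using legal_move_slide_left[of Wh "W @ Bk # wb z" R]
    by (simp add: stage_def W_def R_def replicate_app_Cons_same)
  from relpowp_Suc_I2[OF this sweep_left[of "Suc z" W R]] show ?thesis
    by (simp add: stage_def W_def R_def)
qed

lemma stage_absorb_from_left:
  "(legal_move ^^ (z + 2)) (stage x (Suc y) z (Suc u) v True) (stage x y (Suc z) u v False)"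
proof -
  define W R where "W = replicate x Wh @ replicate y Bk" and "R = replicate u Wh @ replicate v Bk"
  have "legal_move (stage x (Suc y) z (Suc u) v True) (W @ Vac # bw (Suc z) @ R)"
    using legal_move_slide_right[of Bk W "wb z @ Wh # R"]
    by (simp add: stage_def W_def R_def replicate_app_Cons_same)
  from relpowp_Suc_I2[OF this sweep_right[of "Suc z" W R]] show ?thesis
    by (simp add: stage_def W_def R_def)
qed

lemma stage_pass_from_right:
  "(legal_move ^^ (z + 2)) (stage x (Suc y) (Suc z) 0 v False) (stage x y (Suc z) 0 (Suc v) True)"
proof -
  define W R where "W = replicate x Wh @ replicate y Bk" and "R = replicate v Bk"
  have "legal_move (stage x (Suc y) (Suc z) 0 v False) (W @ bw (Suc z) @ Vac # Bk # R)"
    using legal_move_slide_right[of Bk "W @ Bk # wb z @ [Wh]" R]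
    by (simp add: stage_def W_def R_def replicate_app_Cons_same)
  from relpowp_Suc_I2[OF this sweep_left[of "Suc z" W "Bk # R"]] show ?thesis
    by (simp add: stage_def W_def R_def)
qed

lemma stage_pass_from_left:
  "(legal_move ^^ (z + 1)) (stage x (Suc y) z 0 v True) (stage x y z 0 (Suc v) False)"
proof -
  define W R where "W = replicate x Wh @ replicate y Bk" and "R = replicate v Bk"
  have "legal_move (stage x (Suc y) z 0 v True) (W @ Vac # bw z @ Bk # R)"
    using legal_move_slide_right[of Bk W "wb z @ R"]
    by (simp add: stage_def W_def R_def replicate_app_Cons_same)
  from relpowp_Suc_I2[OF this sweep_right[of z W "Bk # R"]] show ?thesis
    by (simp add: stage_def W_def R_def)
qed

lemma stage_release_from_right:
  "(legal_move ^^ (z + 1)) (stage x 0 (Suc z) 0 v False) (stage (Suc x) 0 z 0 (Suc v) True)"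
proof -
  define R where "R = replicate v Bk"
  have "legal_move (stage x 0 (Suc z) 0 v False) (replicate (Suc x) Wh @ bw z @ Vac # Bk # R)"
    using legal_move_slide_right[of Bk "replicate x Wh @ wb z @ [Wh]" R]
    by (simp add: stage_def R_def replicate_app_Cons_same)
  from relpowp_Suc_I2[OF this sweep_left[of z "replicate (Suc x) Wh" "Bk # R"]] show ?thesis
    by (simp add: stage_def R_def)
qed

lemma stage_release_from_left:
  "(legal_move ^^ (z + 1)) (stage x 0 (Suc z) 0 v True) (stage (Suc x) 0 z 0 (Suc v) False)"
proof -
  define R where "R = replicate v Bk"
  have "legal_move (stage x 0 (Suc z) 0 v True) (replicate (Suc x) Wh @ Vac # bw z @ Bk # R)"
    using legal_move_slide_left[of Wh "replicate x Wh" "Bk # wb z @ R"]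
    by (simp add: stage_def R_def replicate_app_Cons_same)
  from relpowp_Suc_I2[OF this sweep_right[of z "replicate (Suc x) Wh" "Bk # R"]] show ?thesis
    by (simp add: stage_def R_def)
qed

fun lam_index :: "nat \<Rightarrow> nat" where
  "lam_index 0 = 0"
| "lam_index (Suc t) = lam_index t + t + 2"

lemma lam_index_closed_form: "2 * lam_index t = t * t + 3 * t"
  by (induction t) (auto simp: algebra_simps)

lemma lam_stage: "lam n m t = stage 0 (n - t) t (m - t) 0 (odd t)"
  by (simp add: lam_def stage_def wb_eq_concat)

lemma lam_to_next_lam:
  assumes "t < m" "m \<le> n"
  shows "(legal_move ^^ (t + 2)) (lam n m t) (lam n m (Suc t))"
proof -
  have "n - t = Suc (n - Suc t)" "m - t = Suc (m - Suc t)" using assms by auto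
  then show ?thesis
    using stage_absorb_from_right[of t 0 "n - Suc t" "m - Suc t" 0]
      stage_absorb_from_left[of t 0 "n - Suc t" "m - Suc t" 0]
    by (cases "odd t") (simp_all add: lam_stage)
qed

lemma init_to_lam:
  assumes "m \<le> n"
  shows "t \<le> m \<Longrightarrow> (legal_move ^^ lam_index t) (init_config n m) (lam n m t)"
proof (induction t)
  case 0
  show ?case by (simp add: lam_def init_config_def)
next
  case (Suc t)
  from relpowp_trans[OF Suc.IH lam_to_next_lam] Suc.prems assms show ?case by simp
qed

lemma stage_pass_all:
  "\<exists>f'. (legal_move ^^ (y * (z + 2))) (stage x y (Suc z) 0 v f) (stage x 0 (Suc z) 0 (v + y) f')"
proof (induction y arbitrary: v f)
  case 0
  then show ?case by auto
next
  case (Suc y)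
  have "(legal_move ^^ (z + 2)) (stage x (Suc y) (Suc z) 0 v f) (stage x y (Suc z) 0 (Suc v) (\<not> f))"
    using stage_pass_from_right[of z x y v] stage_pass_from_left[of "Suc z" x y v]
    by (cases f) simp_all
  moreover obtain f' where
    "(legal_move ^^ (y * (z + 2)))
       (stage x y (Suc z) 0 (Suc v) (\<not> f)) (stage x 0 (Suc z) 0 (v + Suc y) f')"
    using Suc.IH[of "Suc v" "\<not> f"] by auto
  moreover have "z + 2 + y * (z + 2) = Suc y * (z + 2)" by simp
  ultimately show ?case by (metis relpowp_trans)
qed

lemma stage_release_all:
  "\<exists>f'. (legal_move ^^ (z * (z + 1) div 2)) (stage x 0 z 0 v f) (stage (x + z) 0 0 0 (v + z) f')"
proof (induction z arbitrary: x v f)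
  case 0
  then show ?case by auto
next
  case (Suc z)
  have "(legal_move ^^ (z + 1)) (stage x 0 (Suc z) 0 v f) (stage (Suc x) 0 z 0 (Suc v) (\<not> f))"
    using stage_release_from_right[of z x v] stage_release_from_left[of z x v] by (cases f) simp_all
  moreover obtain f' where
    "(legal_move ^^ (z * (z + 1) div 2))
       (stage (Suc x) 0 z 0 (Suc v) (\<not> f)) (stage (x + Suc z) 0 0 0 (v + Suc z) f')"
    using Suc.IH[of "Suc x" "Suc v" "\<not> f"] by auto
  moreover have "z + 1 + z * (z + 1) div 2 = Suc z * (Suc z + 1) div 2" by simp
  ultimately show ?case by (metis relpowp_trans)
qed

lemma standard_solution:
  assumes "1 \<le> m" "m \<le> n"
  shows "\<exists>q. is_solution n m q \<and> length q = n * m + n + m + 1"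
proof -
  obtain z where z: "m = Suc z" using assms(1) by (cases m) auto
  have "lam n m m = stage 0 (n - m) (Suc z) 0 0 (odd m)" by (simp add: lam_stage z)
  then have phase1: "(legal_move ^^ lam_index m)
      (init_config n m) (stage 0 (n - m) (Suc z) 0 0 (odd m))"
    using init_to_lam[OF assms(2) order_refl] by simp
  obtain f where phase2: "(legal_move ^^ ((n - m) * (z + 2)))
      (stage 0 (n - m) (Suc z) 0 0 (odd m)) (stage 0 0 (Suc z) 0 (n - m) f)"
    using stage_pass_all[of "n - m" z 0 0 "odd m"] by auto
  obtain f' where phase3: "(legal_move ^^ (m * (m + 1) div 2))
      (stage 0 0 (Suc z) 0 (n - m) f) (stage m 0 0 0 n f')"
    using stage_release_all[of m 0 "n - m" f] assms(2) z by auto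
  have "stage m 0 0 0 n f' = final_config n m" by (simp add: stage_def final_config_def)
  moreover have "lam_index m + (n - m) * (z + 2) + m * (m + 1) div 2 = n * m + n + m"
  proof -
    obtain d where "n = m + d" using assms(2) le_Suc_ex by blast
    then show ?thesis using lam_index_closed_form[of m] z by (simp add: algebra_simps)
  qed
  ultimately have "(legal_move ^^ (n * m + n + m)) (init_config n m) (final_config n m)"
    using relpowp_trans[OF relpowp_trans[OF phase1 phase2] phase3] by metis
  then obtain f where f: "f 0 = init_config n m" "f (n * m + n + m) = final_config n m"
    "\<forall>i < n * m + n + m. legal_move (f i) (f (Suc i))"
    by (auto simp: relpowp_fun_conv)
  have "is_solution n m (map f [0..<Suc (n * m + n + m)])"
    using f by (auto simp: is_solution_def hd_map last_map simp del: upt_Suc)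
  then show ?thesis by fastforce
qed

section \<open>Optimal solutions consist of tight moves\<close>

lemma count_list_replicate [simp]: "count_list (replicate k a) b = (if a = b then k else 0)"
  by (induction k) auto

lemma inversions_replicate [simp]: "inversions (replicate k a) = 0"
  by (induction k) auto

lemma twins_followed_by_absent: "b \<notin> set xs \<Longrightarrow> twins_followed_by a b xs = 0"
  by (induction a b xs rule: twins_followed_by.induct) auto

lemma twins_followed_by_replicate: "a \<noteq> c \<Longrightarrow> twins_followed_by a b (replicate k c) = 0"
  by (induction k) (auto simp: twins_followed_by_Cons)

lemma potential_init_config:
  assumes "1 \<le> m" "1 \<le> n"
  shows "potential (init_config n m) = int (n * m + n + m)"
  using assms
  by (simp add: init_config_def potential_split split_potential_def twins_followed_by_replicate)

lemma potential_final_config: "potential (final_config n m) = 0"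
proof -
  have "potential (final_config n m) = split_potential (replicate m Wh) (replicate n Bk)"
    by (simp add: final_config_def potential_split)
  also have "\<dots> = 0"
    by (cases m; cases n) (simp_all add: split_potential_def twins_followed_by_absent)
  finally show ?thesis .
qed

lemma solution_potential:
  assumes "is_solution n m p" "1 \<le> m" "1 \<le> n" "k \<le> l" "l < length p"
  shows "\<bar>potential (p ! l) - potential (p ! k)\<bar> \<le> int (l - k)"
proof -
  have "p ! 0 = init_config n m" using assms(1) by (auto simp: is_solution_def hd_conv_nth)
  then have "one_vacancy (p ! 0)" unfolding one_vacancy_def init_config_def
    by (intro exI[of _ "replicate n Bk"] exI[of _ "replicate m Wh"]) simp
  then show ?thesis
    using potential_along_moves[of p l k] assms(1,4,5) by (auto simp: is_solution_def)
qed

lemma solution_length_ge: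
  assumes "is_solution n m p" "1 \<le> m" "1 \<le> n"
  shows "n * m + n + m + 1 \<le> length p"
proof -
  have "p \<noteq> []" "p ! 0 = init_config n m" "p ! (length p - 1) = final_config n m"
    using assms(1) by (auto simp: is_solution_def hd_conv_nth last_conv_nth)
  then have "int (n * m + n + m) \<le> int (length p - 1)"
    using solution_potential[OF assms, of 0 "length p - 1"]
    by (simp add: potential_init_config[OF assms(2,3)] potential_final_config)
  then have "n * m + n + m \<le> length p - 1" by (simp only: of_nat_le_iff)
  then show ?thesis using \<open>p \<noteq> []\<close> by (cases p) auto
qed

lemma optimal_length:
  assumes "is_optimal n m p" "1 \<le> m" "m \<le> n"
  shows "length p = n * m + n + m + 1"
  using assms standard_solution[OF assms(2,3)] solution_length_ge[of n m p]
  by (force simp: is_optimal_def)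

lemma optimal_potential:
  assumes "is_optimal n m p" "1 \<le> m" "m \<le> n" "j < length p"
  shows "potential (p ! j) = int (n * m + n + m) - int j"
proof -
  let ?L = "n * m + n + m"
  have sol: "is_solution n m p" using assms(1) by (simp add: is_optimal_def)
  have len: "length p = ?L + 1" using optimal_length[OF assms(1-3)] .
  have "p ! 0 = init_config n m" "p ! ?L = final_config n m"
    using sol len by (auto simp: is_solution_def hd_conv_nth last_conv_nth)
  moreover have "\<bar>potential (p ! j) - potential (p ! 0)\<bar> \<le> int j"
    "\<bar>potential (p ! ?L) - potential (p ! j)\<bar> \<le> int (?L - j)"
    using assms(4) len solution_potential[OF sol assms(2), of 0 j]
      solution_potential[OF sol assms(2), of j ?L]
      order_trans[OF assms(2,3)] by simp_all
  moreover have "potential (init_config n m) = int ?L"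
    using potential_init_config assms(2,3) by simp
  ultimately show ?thesis
    using potential_final_config[of n m] assms(4) len by (simp add: abs_le_iff of_nat_diff)
qed

lemma optimal_tight_move:
  assumes "is_optimal n m p" "1 \<le> m" "m \<le> n" "j + 1 < length p"
  shows "tight_move (p ! j) (p ! (j + 1))"
  using assms optimal_potential[OF assms(1-3), of j] optimal_potential[OF assms(1-3), of "j + 1"]
  by (auto simp: tight_move_def is_optimal_def is_solution_def)

lemma optimal_nth_inj:
  assumes "is_optimal n m p" "1 \<le> m" "m \<le> n" "i < length p" "j < length p" "p ! i = p ! j"
  shows "i = j"
proof -
  have "int (n * m + n + m) - int i = int (n * m + n + m) - int j"
    using assms(4-6) optimal_potential[OF assms(1-3)] by metis
  then show ?thesis by simp
qed

section \<open>Forced tight moves\<close>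

definition right_sweep :: "nat \<Rightarrow> nat \<Rightarrow> nat \<Rightarrow> nat \<Rightarrow> config" where
  "right_sweep p a s r = replicate p Bk @ wb s @ [Vac] @ bw a @ replicate r Wh"

definition left_sweep :: "nat \<Rightarrow> nat \<Rightarrow> nat \<Rightarrow> nat \<Rightarrow> config" where
  "left_sweep p a s r = replicate p Bk @ bw a @ [Vac] @ wb s @ replicate r Wh"

lemma right_sweep_split:
  "right_sweep p a s r = rev (bw s @ replicate p Bk) @ Vac # bw a @ replicate r Wh"
  by (simp add: right_sweep_def)

lemma left_sweep_split:
  "left_sweep p a s r = rev (wb a @ replicate p Bk) @ Vac # wb s @ replicate r Wh"
  by (simp add: left_sweep_def)

lemma right_sweep_tight_move:
  assumes "tight_move (right_sweep p (Suc a) s r) c'"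
  shows "c' = right_sweep p a (Suc s) r"
proof -
  have "tight_move (rev (bw s @ replicate p Bk) @ Vac # Bk # Wh # bw a @ replicate r Wh) c'"
    using assms by (simp add: right_sweep_split)
  then show ?thesis by (rule tight_move_cases) (auto simp: right_sweep_def)
qed

lemma left_sweep_tight_move:
  assumes "tight_move (left_sweep p (Suc a) s r) c'"
  shows "c' = left_sweep p a (Suc s) r"
proof -
  have "tight_move (rev (Wh # Bk # wb a @ replicate p Bk) @ Vac # wb s @ replicate r Wh) c'"
    using assms by (simp add: left_sweep_split)
  then show ?thesis by (rule tight_move_cases) (auto simp: left_sweep_def)
qed

lemma no_tight_move_Bk_slid_out_of_right_sweep:
  "\<not> tight_move (rev (Wh # bw s @ replicate (Suc p) Bk) @ Vac # Bk # replicate (Suc r) Wh) c"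
proof
  assume "tight_move (rev (Wh # bw s @ replicate (Suc p) Bk) @ Vac # Bk # replicate (Suc r) Wh) c"
  then show False by (rule tight_move_cases) (cases s; auto)+
qed

lemma no_tight_move_Wh_jumped_after_right_sweep:
  assumes "Vac \<notin> set xr"
  shows "\<not> tight_move (rev (Wh # Wh # Bk # xr) @ Vac # replicate r Wh) c"
proof
  assume "tight_move (rev (Wh # Wh # Bk # xr) @ Vac # replicate r Wh) c"
  then show False by (rule tight_move_cases) (use assms in \<open>cases r; auto\<close>)+
qed

lemma no_tight_move_Wh_slid_out_of_left_sweep:
  "\<not> tight_move (rev (Wh # replicate (Suc p) Bk) @ Vac # Bk # wb s @ replicate (Suc r) Wh) c"
proof
  assume "tight_move (rev (Wh # replicate (Suc p) Bk) @ Vac # Bk # wb s @ replicate (Suc r) Wh) c"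
  then show False by (rule tight_move_cases) (cases s; auto)+
qed

lemma no_tight_move_Bk_jumped_after_left_sweep:
  assumes "Wh \<in> set y" "Vac \<notin> set y"
  shows "\<not> tight_move (rev (replicate p Bk) @ Vac # Bk # Bk # y) c"
proof
  assume "tight_move (rev (replicate p Bk) @ Vac # Bk # Bk # y) c"
  then show False by (rule tight_move_cases) (use assms in \<open>cases p; auto\<close>)+
qed

text \<open>At the end of a sweep there are two tight moves, and the wrong one leads to a configuration
  without tight moves; hence the hypothesis on the following move.\<close>

lemma right_sweep_end_tight_moves:
  assumes "tight_move (right_sweep (Suc p) 0 (Suc s) (Suc r)) c'" "tight_move c' c''"
  shows "c' = left_sweep p (Suc (Suc s)) 0 r"
proof -
  let ?xr = "Bk # Wh # bw s @ replicate (Suc p) Bk"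
  have "tight_move (rev ?xr @ Vac # Wh # replicate r Wh) c'"
    "Vac \<notin> set ?xr" "Vac \<notin> set (Wh # replicate r Wh)"
    using assms(1) by (auto simp: right_sweep_split)
  then show ?thesis
  proof (cases rule: tight_move_cases)
    case (slide_Bk xr0)
    then show ?thesis
      using assms(2) no_tight_move_Bk_slid_out_of_right_sweep[of s p r c''] by simp
  next
    case (slide_Wh y0)
    then show ?thesis by (simp add: left_sweep_def replicate_app_Cons_same)
  next
    case (jump_Wh a y0)
    then have "c' = rev (Wh # Wh # ?xr) @ Vac # replicate (r - 1) Wh"
      by (cases r) auto
    then show ?thesis
      using assms(2) no_tight_move_Wh_jumped_after_right_sweep[of "tl ?xr"]
      by simp
  qed simp
qed

lemma left_sweep_end_tight_moves:
  assumes "tight_move (left_sweep (Suc p) 0 (Suc s) (Suc r)) c'" "tight_move c' c''"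
  shows "c' = right_sweep p (Suc (Suc s)) 0 r"
proof -
  let ?y = "Wh # Bk # wb s @ replicate (Suc r) Wh"
  have "tight_move (rev (replicate (Suc p) Bk) @ Vac # ?y) c'"
    "Vac \<notin> set (replicate (Suc p) Bk)" "Vac \<notin> set ?y"
    using assms(1) by (auto simp: left_sweep_split)
  then show ?thesis
  proof (cases rule: tight_move_cases)
    case (slide_Bk xr0)
    then show ?thesis by (auto simp: right_sweep_def)
  next
    case (slide_Wh y0)
    then show ?thesis
      using assms(2) no_tight_move_Wh_slid_out_of_left_sweep[of p s r c''] by simp
  next
    case (jump_Bk a xr0)
    then have "c' = rev (replicate (p - 1) Bk) @ Vac # Bk # Bk # ?y"
      by (cases p) auto
    then show ?thesis
      using assms(2) no_tight_move_Bk_jumped_after_left_sweep[of ?y] by simp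
  qed simp
qed

lemma lam_right_sweep: "even t \<Longrightarrow> lam n m t = right_sweep (n - t) 0 t (m - t)"
  by (simp add: lam_def right_sweep_def wb_eq_concat)

lemma lam_left_sweep: "odd t \<Longrightarrow> lam n m t = left_sweep (n - t) 0 t (m - t)"
  by (simp add: lam_def left_sweep_def wb_eq_concat)

lemma xi1_left_sweep: "1 \<le> n \<Longrightarrow> xi1 n m = left_sweep (n - 1) 1 0 (m - 1)"
  by (cases n) (auto simp: xi1_def left_sweep_def replicate_app_Cons_same)

text \<open>The configurations visited between \<open>lam t\<close> and \<open>lam (t + 1)\<close>: a single turning move,
  followed by \<open>t + 1\<close> jumps sweeping the vacancy through the alternating block.\<close>
definition lam_segment :: "nat \<Rightarrow> nat \<Rightarrow> nat \<Rightarrow> nat \<Rightarrow> config" where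
  "lam_segment n m t s =
     (if s = 0 then lam n m t
      else if odd t then right_sweep (n - t - 1) (t + 2 - s) (s - 1) (m - t - 1)
      else left_sweep (n - t - 1) (t + 2 - s) (s - 1) (m - t - 1))"

lemma lam_segment_end: "t < m \<Longrightarrow> m \<le> n \<Longrightarrow> lam_segment n m t (t + 2) = lam n m (Suc t)"
  by (cases "odd t") (simp_all add: lam_segment_def lam_right_sweep lam_left_sweep)

lemma lam_segment_tight_move:
  assumes "1 \<le> t" "t < m" "m \<le> n" "s \<le> t + 1"
    and "tight_move (lam_segment n m t s) c'" "tight_move c' c''"
  shows "c' = lam_segment n m t (Suc s)"
proof -
  obtain p r t' where eqs: "n - t = Suc p" "m - t = Suc r" "t = Suc t'"
    using assms(1-3) by (intro that[of "n - Suc t" "m - Suc t" "t - 1"]) auto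
  show ?thesis
  proof (cases "s = 0")
    case True
    show ?thesis
    proof (cases "odd t")
      case True
      then have "tight_move (left_sweep (Suc p) 0 (Suc t') (Suc r)) c'"
        using assms(5) \<open>s = 0\<close> eqs by (simp add: lam_segment_def lam_left_sweep)
      from left_sweep_end_tight_moves[OF this assms(6)] show ?thesis
        using True \<open>s = 0\<close> eqs by (simp add: lam_segment_def)
    next
      case False
      then have "tight_move (right_sweep (Suc p) 0 (Suc t') (Suc r)) c'"
        using assms(5) \<open>s = 0\<close> eqs by (simp add: lam_segment_def lam_right_sweep)
      from right_sweep_end_tight_moves[OF this assms(6)] show ?thesis
        using False \<open>s = 0\<close> eqs by (simp add: lam_segment_def)
    qed
  next
    case False
    then have a: "t + 2 - s = Suc (t + 2 - Suc s)" "Suc (s - 1) = s" using assms(4) by simp_all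
    show ?thesis
    proof (cases "odd t")
      case True
      then have "tight_move (right_sweep (n - t - 1) (Suc (t + 2 - Suc s)) (s - 1) (m - t - 1)) c'"
        using assms(5) False a by (simp add: lam_segment_def)
      from right_sweep_tight_move[OF this] show ?thesis using True False a
        by (simp add: lam_segment_def)
    next
      case even: False
      then have "tight_move (left_sweep (n - t - 1) (Suc (t + 2 - Suc s)) (s - 1) (m - t - 1)) c'"
        using assms(5) False a by (simp add: lam_segment_def)
      from left_sweep_tight_move[OF this] show ?thesis using even False a
        by (simp add: lam_segment_def)
    qed
  qed
qed

lemma lam_index_mono: "t \<le> u \<Longrightarrow> lam_index t \<le> lam_index u"
  by (induction u) (auto simp: le_Suc_eq)

lemma lam_index_less_optimal_length:
  assumes "1 \<le> m" "m \<le> n"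
  shows "lam_index m + 1 < n * m + n + m + 1"
proof -
  have "m * m \<le> n * m" "m \<le> n * m" using assms by simp_all
  then show ?thesis using lam_index_closed_form[of m] assms by linarith
qed

lemma optimal_lam_segment:
  assumes "is_optimal n m p" "1 \<le> m" "m \<le> n" "1 \<le> t" "t < m" "p ! lam_index t = lam n m t"
  shows "s \<le> t + 2 \<Longrightarrow> p ! (lam_index t + s) = lam_segment n m t s"
proof (induction s)
  case 0
  then show ?case using assms(6) by (simp add: lam_segment_def)
next
  case (Suc s)
  have "lam_index t + s + 2 < length p"
    using Suc.prems lam_index_mono[of "Suc t" m] assms(2,3,5)
      lam_index_less_optimal_length[OF assms(2,3)] optimal_length[OF assms(1-3)] by simp
  then have "tight_move (p ! (lam_index t + s)) (p ! (lam_index t + Suc s))"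
    "tight_move (p ! (lam_index t + Suc s)) (p ! (lam_index t + Suc s + 1))"
    using optimal_tight_move[OF assms(1-3)] by simp_all
  then show ?case
    using lam_segment_tight_move[OF assms(4,5,3)] Suc by simp
qed

lemma optimal_visits_lam:
  assumes "is_optimal n m p" "1 \<le> m" "m \<le> n" "p ! 1 = xi1 n m"
  shows "1 \<le> t \<Longrightarrow> t \<le> m \<Longrightarrow> p ! lam_index t = lam n m t"
proof (induction t)
  case (Suc t)
  show ?case
  proof (cases "t = 0")
    case True
    have "2 < length p"
      using optimal_length[OF assms(1-3)] assms(2,3) by linarith
    then have "tight_move (left_sweep (n - 1) 1 0 (m - 1)) (p ! 2)"
      using optimal_tight_move[OF assms(1-3), of 1] assms(2,3,4) xi1_left_sweep[of n m]
      by (simp add: numeral_2_eq_2)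
    then show ?thesis
      using left_sweep_tight_move[of "n - 1" 0 0 "m - 1"] lam_left_sweep[of 1 n m] True
      by (simp add: numeral_2_eq_2)
  next
    case False
    then have "p ! lam_index t = lam n m t" "1 \<le> t" "t < m" using Suc by simp_all
    from optimal_lam_segment[OF assms(1-3) this(2,3,1), of "t + 2"]
    have "p ! (lam_index t + (t + 2)) = lam_segment n m t (t + 2)" by simp
    then show ?thesis using lam_segment_end[of t m n] Suc.prems assms(3) by (simp add: add.assoc)
  qed
qed simp

lemma optimal_lam_index_bound:
  assumes "is_optimal n m p" "1 \<le> m" "m \<le> n" "t \<le> m"
  shows "lam_index t < length p"
  using lam_index_mono[OF assms(4)] lam_index_less_optimal_length[OF assms(2,3)]
    optimal_length[OF assms(1-3)] by simp

lemma optimal_segment: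
  assumes "is_optimal n m p" "1 \<le> m" "m \<le> n" "p ! 1 = xi1 n m" "1 \<le> t" "t < m"
  shows "take (lam_index (Suc t) - lam_index t + 1) (drop (lam_index t) p)
    = map (lam_segment n m t) [0..<t + 3]"
proof (rule nth_equalityI)
  have "lam_index t + (t + 3) \<le> length p"
    using optimal_lam_index_bound[OF assms(1-3), of "Suc t"] assms(6) by simp
  then show "length (take (lam_index (Suc t) - lam_index t + 1) (drop (lam_index t) p))
      = length (map (lam_segment n m t) [0..<t + 3])"
    by simp
  then show "take (lam_index (Suc t) - lam_index t + 1) (drop (lam_index t) p) ! s
      = map (lam_segment n m t) [0..<t + 3] ! s"
    if "s < length (take (lam_index (Suc t) - lam_index t + 1) (drop (lam_index t) p))" for s
    using that assms(6)
      optimal_lam_segment[OF assms(1-3,5,6) optimal_visits_lam[OF assms(1-5)], of s]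
    by simp
qed

theorem lemma8:
  fixes n m :: nat
  assumes "2 \<le> m" and "m \<le> n"
  shows "(\<forall>p. is_optimal n m p \<and> 1 < length p \<and> p ! 1 = xi1 n m \<longrightarrow>
            (\<exists>k :: nat \<Rightarrow> nat. (\<forall>t\<in>{1..m}. k t < length p \<and> p ! k t = lam n m t) \<and>
                (\<forall>t\<in>{1..<m}. k t < k (t + 1))))
       \<and> (\<forall>p q. is_optimal n m p \<and> 1 < length p \<and> p ! 1 = xi1 n m \<and>
                is_optimal n m q \<and> 1 < length q \<and> q ! 1 = xi1 n m \<longrightarrow>
            (\<forall>i\<in>{1..<m}. \<forall>a a' c c'.
               a \<le> a' \<and> a' < length p \<and> p ! a = lam n m i \<and> p ! a' = lam n m (i + 1) \<and>
               c \<le> c' \<and> c' < length q \<and> q ! c = lam n m i \<and> q ! c' = lam n m (i + 1) \<longrightarrow>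
               take (a' - a + 1) (drop a p) = take (c' - c + 1) (drop c q)))"
proof -
  have m: "1 \<le> m" using assms(1) by simp
  have visits: "lam_index t < length p \<and> p ! lam_index t = lam n m t"
    if "is_optimal n m p" "p ! 1 = xi1 n m" "t \<in> {1..m}" for p t
    using that optimal_lam_index_bound[OF that(1) m assms(2)]
      optimal_visits_lam[OF that(1) m assms(2) that(2)]
    by simp
  have position: "a = lam_index t"
    if "is_optimal n m p" "p ! 1 = xi1 n m" "t \<in> {1..m}" "a < length p" "p ! a = lam n m t"
    for p t a
    using optimal_nth_inj[OF that(1) m assms(2) that(4)] visits[OF that(1-3)] that(5) by simp
  have segment: "take (a' - a + 1) (drop a p) = map (lam_segment n m i) [0..<i + 3]"
    if "is_optimal n m p" "p ! 1 = xi1 n m" "i \<in> {1..<m}" "a \<le> a'" "a' < length p"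
      "p ! a = lam n m i" "p ! a' = lam n m (i + 1)" for p i a a'
  proof -
    have "a = lam_index i" "a' = lam_index (Suc i)"
      using position[OF that(1,2), of i a] position[OF that(1,2), of "i + 1" a'] that by auto
    then show ?thesis using optimal_segment[OF that(1) m assms(2) that(2), of i] that(3) by simp
  qed
  show ?thesis
  proof (intro conjI allI impI ballI)
    fix p assume "is_optimal n m p \<and> 1 < length p \<and> p ! 1 = xi1 n m"
    then show "\<exists>k. (\<forall>t\<in>{1..m}. k t < length p \<and> p ! k t = lam n m t)
      \<and> (\<forall>t\<in>{1..<m}. k t < k (t + 1))"
      using visits by (intro exI[of _ lam_index]) auto
  next
    fix p q i a a' c c'
    assume "is_optimal n m p \<and> 1 < length p \<and> p ! 1 = xi1 n m \<and>
      is_optimal n m q \<and> 1 < length q \<and> q ! 1 = xi1 n m" "i \<in> {1..<m}"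
      "a \<le> a' \<and> a' < length p \<and> p ! a = lam n m i \<and> p ! a' = lam n m (i + 1) \<and>
       c \<le> c' \<and> c' < length q \<and> q ! c = lam n m i \<and> q ! c' = lam n m (i + 1)"
    then show "take (a' - a + 1) (drop a p) = take (c' - c + 1) (drop c q)"
      using segment[of p i a a'] segment[of q i c c'] by metis
  qed
qed

end
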